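(* Let $\Lambda=K\mathcal{Q}/I$ be a finite-dimensional algebra over a field $K$ as in the context, let $A\geqslant1$, let $\tilde{\Lambda}=\tilde{\Lambda}_A$ be its stretched algebra, and let $\varepsilon=\sum_{v\in\mathcal{Q}_0}v\in\tilde{\Lambda}$. Then $\Lambda\cong\varepsilon\tilde{\Lambda}\varepsilon$ as $K$-algebras.
   Context: Conventions: $\mathcal{Q}$ is a finite quiver with vertex set $\mathcal{Q}_0$; $\mathfrak{o}(\alpha)$, $\mathfrak{t}(\alpha)$ denote start and end of an arrow; paths are written left to right. An element $x\in K\mathcal{Q}$ is uniform if $x=vx=xv'$ for vertices $v,v'$. $\Lambda=K\mathcal{Q}/I$ is finite-dimensional with $I$ an admissible ideal generated by a minimal set $\{g^2_1,\dots,g^2_m\}$ of uniform elements. Stretched algebra: for $A\geqslant1$, the quiver $\tilde{\mathcal{Q}}_A$ has all vertices of $\mathcal{Q}$ plus, for each arrow $\alpha$ of $\mathcal{Q}$, new vertices $w_1,\dots,w_{A-1}$; each arrow $\alpha$ is replaced by arrows $\alpha_1,\dots,\alpha_A$ with $\mathfrak{o}(\alpha_1)=\mathfrak{o}(\alpha)$, $\mathfrak{t}(\alpha_j)=\mathfrak{o}(\alpha_{j+1})=w_j$ ($1\le j\le A-1$), $\mathfrak{t}(\alpha_A)=\mathfrak{t}(\alpha)$, and the only arrows incident with $w_j$ are $\alpha_j,\alpha_{j+1}$. $\theta^*:K\mathcal{Q}\to K\tilde{\mathcal{Q}}_A$ is the algebra homomorphism fixing vertices and sending $\alpha\mapsto\alpha_1\cdots\alpha_A$;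 $\tilde{I}_A$ is the ideal generated by $\theta^*(g^2_1),\dots,\theta^*(g^2_m)$; $\tilde{\Lambda}_A=K\tilde{\mathcal{Q}}_A/\tilde{I}_A$. *)

theory Defs
  imports "HOL-Algebra.QuotRing"
begin

text \<open>A path is a pair (v, as): a start vertex v
  and a list of arrows, read left to right; (v, []) is the trivial path at v.\<close>

definition valid_path ::
  "'v set \<Rightarrow> 'a set \<Rightarrow> ('a \<Rightarrow> 'v) \<Rightarrow> ('a \<Rightarrow> 'v) \<Rightarrow> 'v \<times> 'a list \<Rightarrow> bool" where
  "valid_path V E src tgt p \<longleftrightarrow>
     fst p \<in> V \<and> set (snd p) \<subseteq> E \<and>
     (snd p \<noteq> [] \<longrightarrow> src (hd (snd p)) = fst p) \<and>
     (\<forall>i. Suc i < length (snd p) \<longrightarrow> tgt (snd p ! i) = src (snd p ! Suc i))"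

definition path_end :: "('a \<Rightarrow> 'v) \<Rightarrow> 'v \<times> 'a list \<Rightarrow> 'v" where
  "path_end tgt p = (if snd p = [] then fst p else tgt (last (snd p)))"

definition path_cat :: "'v \<times> 'a list \<Rightarrow> 'v \<times> 'a list \<Rightarrow> 'v \<times> 'a list" where
  "path_cat p q = (fst p, snd p @ snd q)"

text \<open>Elements of the path algebra KQ: finitely supported K-valued functions on paths
  (the coefficient of each path), supported on valid paths.\<close>

definition pa_mult ::
  "('a \<Rightarrow> 'v) \<Rightarrow> ('v \<times> 'a list \<Rightarrow> 'k::field) \<Rightarrow> ('v \<times> 'a list \<Rightarrow> 'k) \<Rightarrow> ('v \<times> 'a list \<Rightarrow> 'k)" where
  "pa_mult tgt f g = (\<lambda>r. \<Sum>(p, q) \<in> {p. f p \<noteq> 0} \<times> {q. g q \<noteq> 0}.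
       if path_end tgt p = fst q \<and> path_cat p q = r then f p * g q else 0)"

definition path_algebra ::
  "'v set \<Rightarrow> 'a set \<Rightarrow> ('a \<Rightarrow> 'v) \<Rightarrow> ('a \<Rightarrow> 'v) \<Rightarrow> ('v \<times> 'a list \<Rightarrow> 'k::field) ring" where
  "path_algebra V E src tgt =
     \<lparr> carrier = {f. finite {p. f p \<noteq> 0} \<and> (\<forall>p. f p \<noteq> 0 \<longrightarrow> valid_path V E src tgt p)},
       monoid.mult = pa_mult tgt,
       one = (\<lambda>p. if snd p = [] \<and> fst p \<in> V then 1 else 0),
       zero = (\<lambda>p. 0),
       add = (\<lambda>f g p. f p + g p) \<rparr>"

definition path_elem :: "'v \<times> 'a list \<Rightarrow> ('v \<times> 'a list \<Rightarrow> 'k::field)" where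
  "path_elem p = (\<lambda>q. if q = p then 1 else 0)"

definition arrow_ideal_pow ::
  "'v set \<Rightarrow> 'a set \<Rightarrow> ('a \<Rightarrow> 'v) \<Rightarrow> ('a \<Rightarrow> 'v) \<Rightarrow> nat \<Rightarrow> ('v \<times> 'a list \<Rightarrow> 'k::field) set" where
  "arrow_ideal_pow V E src tgt m =
     genideal (path_algebra V E src tgt)
       (path_elem ` {p. valid_path V E src tgt p \<and> length (snd p) = m})"

definition admissible_ideal ::
  "'v set \<Rightarrow> 'a set \<Rightarrow> ('a \<Rightarrow> 'v) \<Rightarrow> ('a \<Rightarrow> 'v) \<Rightarrow> ('v \<times> 'a list \<Rightarrow> 'k::field) set \<Rightarrow> bool" where
  "admissible_ideal V E src tgt I \<longleftrightarrow>
     ideal I (path_algebra V E src tgt) \<and>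
     (\<exists>m\<ge>2. arrow_ideal_pow V E src tgt m \<subseteq> I) \<and> I \<subseteq> arrow_ideal_pow V E src tgt 2"

definition uniform_elem ::
  "'v set \<Rightarrow> 'a set \<Rightarrow> ('a \<Rightarrow> 'v) \<Rightarrow> ('a \<Rightarrow> 'v) \<Rightarrow> ('v \<times> 'a list \<Rightarrow> 'k::field) \<Rightarrow> bool" where
  "uniform_elem V E src tgt x \<longleftrightarrow>
     (\<exists>v\<in>V. \<exists>v'\<in>V.
        x = pa_mult tgt (path_elem (v, [])) x \<and> x = pa_mult tgt x (path_elem (v', [])))"

text \<open>Vertices: Inl v for v in Q_0, and Inr (alpha, j) = w_j (1 \<le> j \<le> A-1) for each arrow alpha.
  Arrows: (alpha, j) = alpha_j for 1 \<le> j \<le> A.\<close>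

definition st_vertices :: "nat \<Rightarrow> 'v set \<Rightarrow> 'a set \<Rightarrow> ('v + 'a \<times> nat) set" where
  "st_vertices A V E = Inl ` V \<union> {Inr (\<alpha>, j) | \<alpha> j. \<alpha> \<in> E \<and> 1 \<le> j \<and> j \<le> A - 1}"

definition st_arrows :: "nat \<Rightarrow> 'a set \<Rightarrow> ('a \<times> nat) set" where
  "st_arrows A E = {(\<alpha>, j) | \<alpha> j. \<alpha> \<in> E \<and> 1 \<le> j \<and> j \<le> A}"

definition st_src :: "nat \<Rightarrow> ('a \<Rightarrow> 'v) \<Rightarrow> 'a \<times> nat \<Rightarrow> 'v + 'a \<times> nat" where
  "st_src A src b = (if snd b = 1 then Inl (src (fst b)) else Inr (fst b, snd b - 1))"

definition st_tgt :: "nat \<Rightarrow> ('a \<Rightarrow> 'v) \<Rightarrow> 'a \<times> nat \<Rightarrow> 'v + 'a \<times> nat" where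
  "st_tgt A tgt b = (if snd b = A then Inl (tgt (fst b)) else Inr b)"

definition theta_path :: "nat \<Rightarrow> 'v \<times> 'a list \<Rightarrow> ('v + 'a \<times> nat) \<times> ('a \<times> nat) list" where
  "theta_path A p = (Inl (fst p), concat (map (\<lambda>\<alpha>. map (\<lambda>j. (\<alpha>, j)) [1..<A+1]) (snd p)))"

definition theta :: "nat \<Rightarrow> ('v \<times> 'a list \<Rightarrow> 'k::field) \<Rightarrow> (('v + 'a \<times> nat) \<times> ('a \<times> nat) list \<Rightarrow> 'k)" where
  "theta A x = (\<lambda>q. \<Sum>p \<in> {p. x p \<noteq> 0 \<and> theta_path A p = q}. x p)"

definition stretched_path_algebra ::
  "nat \<Rightarrow> 'v set \<Rightarrow> 'a set \<Rightarrow> ('a \<Rightarrow> 'v) \<Rightarrow> ('a \<Rightarrow> 'v)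
     \<Rightarrow> (('v + 'a \<times> nat) \<times> ('a \<times> nat) list \<Rightarrow> 'k::field) ring" where
  "stretched_path_algebra A V E src tgt =
     path_algebra (st_vertices A V E) (st_arrows A E) (st_src A src) (st_tgt A tgt)"

definition stretched_ideal ::
  "nat \<Rightarrow> 'v set \<Rightarrow> 'a set \<Rightarrow> ('a \<Rightarrow> 'v) \<Rightarrow> ('a \<Rightarrow> 'v) \<Rightarrow> ('v \<times> 'a list \<Rightarrow> 'k::field) set
     \<Rightarrow> (('v + 'a \<times> nat) \<times> ('a \<times> nat) list \<Rightarrow> 'k) set" where
  "stretched_ideal A V E src tgt G = genideal (stretched_path_algebra A V E src tgt) (theta A ` G)"

definition corner_ring :: "('b, 'c) ring_scheme \<Rightarrow> 'b \<Rightarrow> 'b ring" where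
  "corner_ring S e =
     \<lparr> carrier = {e \<otimes>\<^bsub>S\<^esub> y \<otimes>\<^bsub>S\<^esub> e | y. y \<in> carrier S},
       monoid.mult = monoid.mult S, one = e, zero = zero S, add = add S \<rparr>"

definition quot_smult ::
  "('p \<Rightarrow> 'k::field, 'c) ring_scheme \<Rightarrow> ('p \<Rightarrow> 'k) set \<Rightarrow> 'k \<Rightarrow> ('p \<Rightarrow> 'k) set \<Rightarrow> ('p \<Rightarrow> 'k) set" where
  "quot_smult R I c X = I +>\<^bsub>R\<^esub> (\<lambda>p. c * (SOME x. x \<in> X) p)"

end

(* The stretching map theta* sends a path of Q to the path of the stretched quiver obtained by
   replacing every arrow alpha by alpha_1 ... alpha_A. It is injective and compatible with
   concatenation and with start and end vertices, so it is a multiplicative embedding of KQ into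
   the stretched path algebra taking the unit to epsilon. Its image is exactly the corner
   epsilon KQ~ epsilon: a path of the stretched quiver that starts and ends at old vertices must run
   through every chain w_1 ... w_(A-1) it enters, so it is the stretch of a path of Q.
   It remains to pass to quotients: if theta maps a ring R isomorphically onto a corner e S e, then
   the ideal of S generated by theta G meets e S e exactly in the image of the ideal generated by G,
   hence R / (G) is isomorphic to the corner of S / (theta G) at the class of e. The isomorphism is
   K-linear because theta is. *)

theory Submission
  imports Defs
begin

section \<open>Corner rings\<close>

lemma corner_ring_simps [simp]:
  "x \<otimes>\<^bsub>corner_ring R e\<^esub> y = x \<otimes>\<^bsub>R\<^esub> y"
  "x \<oplus>\<^bsub>corner_ring R e\<^esub> y = x \<oplus>\<^bsub>R\<^esub> y"
  "\<one>\<^bsub>corner_ring R e\<^esub> = e"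
  "\<zero>\<^bsub>corner_ring R e\<^esub> = \<zero>\<^bsub>R\<^esub>"
  by (simp_all add: corner_ring_def)

context ring
begin

lemma idem_mult_left:
  "e \<in> carrier R \<Longrightarrow> e \<otimes> e = e \<Longrightarrow> x \<in> carrier R \<Longrightarrow> e \<otimes> (e \<otimes> x) = e \<otimes> x"
  by (simp add: m_assoc[symmetric])

lemma corner_ring_carrier_iff:
  assumes "e \<in> carrier R" "e \<otimes> e = e"
  shows "z \<in> carrier (corner_ring R e) \<longleftrightarrow> z \<in> carrier R \<and> e \<otimes> z \<otimes> e = z"
proof
  assume "z \<in> carrier (corner_ring R e)"
  then obtain y where "y \<in> carrier R" "z = e \<otimes> y \<otimes> e"
    by (auto simp: corner_ring_def)
  with assms show "z \<in> carrier R \<and> e \<otimes> z \<otimes> e = z"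
    by (simp add: m_assoc idem_mult_left)
next
  assume "z \<in> carrier R \<and> e \<otimes> z \<otimes> e = z"
  then show "z \<in> carrier (corner_ring R e)"
    unfolding corner_ring_def by (auto intro!: exI[of _ z])
qed

lemma corner_ring_absorb:
  assumes e: "e \<in> carrier R" "e \<otimes> e = e" and "z \<in> carrier (corner_ring R e)"
  shows "e \<otimes> z = z" "z \<otimes> e = z"
proof -
  obtain y where y: "y \<in> carrier R" "z = e \<otimes> y \<otimes> e"
    using assms(3) by (auto simp: corner_ring_def)
  with e show "e \<otimes> z = z" "z \<otimes> e = z"
    by (simp_all add: m_assoc idem_mult_left)
qed

lemma corner_ring_carrier_subset:
  "e \<in> carrier R \<Longrightarrow> carrier (corner_ring R e) \<subseteq> carrier R"
  by (auto simp: corner_ring_def)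

lemma ring_corner_ring:
  assumes e: "e \<in> carrier R" "e \<otimes> e = e"
  shows "ring (corner_ring R e)" (is "ring ?C")
proof -
  note carrier_iff = corner_ring_carrier_iff[OF e]
  note in_R = subsetD[OF corner_ring_carrier_subset[OF e(1)]]
  note absorb = corner_ring_absorb[OF e]
  show ?thesis
  proof (rule ringI)
    show "abelian_group ?C"
    proof (rule abelian_groupI)
      fix x y assume "x \<in> carrier ?C" "y \<in> carrier ?C"
      then show "x \<oplus>\<^bsub>?C\<^esub> y \<in> carrier ?C"
        using e by (simp add: carrier_iff l_distr r_distr)
    next
      show "\<zero>\<^bsub>?C\<^esub> \<in> carrier ?C"
        using e by (simp add: carrier_iff)
    next
      fix x assume x: "x \<in> carrier ?C"
      then have "\<ominus> x \<in> carrier ?C"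
        using e by (simp add: carrier_iff l_minus r_minus m_assoc)
      with x show "\<exists>y\<in>carrier ?C. y \<oplus>\<^bsub>?C\<^esub> x = \<zero>\<^bsub>?C\<^esub>"
        by (intro bexI[of _ "\<ominus> x"]) (simp_all add: l_neg in_R)
    qed (auto simp: in_R intro: a_assoc a_comm)
    show "monoid ?C"
    proof (rule monoidI)
      fix x y assume x: "x \<in> carrier ?C" and y: "y \<in> carrier ?C"
      then have "e \<otimes> (x \<otimes> y) \<otimes> e = (e \<otimes> x) \<otimes> (y \<otimes> e)"
        using e by (simp add: m_assoc in_R)
      also have "\<dots> = x \<otimes> y"
        using x y by (simp add: absorb)
      finally show "x \<otimes>\<^bsub>?C\<^esub> y \<in> carrier ?C"
        using x y by (simp add: carrier_iff in_R)
    next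
      show "\<one>\<^bsub>?C\<^esub> \<in> carrier ?C"
        using e by (simp add: carrier_iff)
    qed (simp_all add: in_R m_assoc absorb)
  qed (simp_all add: in_R l_distr r_distr)
qed

lemma corner_ring_minus:
  assumes e: "e \<in> carrier R" "e \<otimes> e = e" and z: "z \<in> carrier (corner_ring R e)"
  shows "\<ominus>\<^bsub>corner_ring R e\<^esub> z = \<ominus> z"
proof -
  interpret C: ring "corner_ring R e" by (rule ring_corner_ring[OF e])
  have "\<ominus> z \<in> carrier (corner_ring R e)"
    using e z by (simp add: corner_ring_carrier_iff l_minus r_minus)
  with z show ?thesis
    by (intro C.minus_equality) (auto simp: corner_ring_carrier_iff[OF e] l_neg)
qed

lemma ideal_Int_corner_ring:
  assumes e: "e \<in> carrier R" "e \<otimes> e = e" and J: "ideal J R"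
  shows "ideal (J \<inter> carrier (corner_ring R e)) (corner_ring R e)"
proof -
  interpret C: ring "corner_ring R e" by (rule ring_corner_ring[OF e])
  interpret J: ideal J R by (rule J)
  show ?thesis
  proof (rule idealI[OF C.ring_axioms])
    show "subgroup (J \<inter> carrier (corner_ring R e)) (add_monoid (corner_ring R e))"
    proof (rule C.add.subgroupI)
      show "J \<inter> carrier (corner_ring R e) \<noteq> {}"
      proof -
        have "\<zero> \<in> carrier (corner_ring R e)"
          using C.zero_closed by simp
        then show ?thesis using J.zero_closed by blast
      qed
    next
      fix a assume "a \<in> J \<inter> carrier (corner_ring R e)"
      then show "\<ominus>\<^bsub>corner_ring R e\<^esub> a \<in> J \<inter> carrier (corner_ring R e)"
        using C.a_inv_closed by (simp add: corner_ring_minus[OF e])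
    next
      fix a b assume "a \<in> J \<inter> carrier (corner_ring R e)" "b \<in> J \<inter> carrier (corner_ring R e)"
      then show "a \<oplus>\<^bsub>corner_ring R e\<^esub> b \<in> J \<inter> carrier (corner_ring R e)"
        using C.a_closed by simp
    qed auto
  next
    fix a x assume a: "a \<in> J \<inter> carrier (corner_ring R e)" and x: "x \<in> carrier (corner_ring R e)"
    then have "x \<otimes> a \<in> J" "a \<otimes> x \<in> J"
      using corner_ring_carrier_subset[OF e(1)] by (auto intro: J.I_l_closed J.I_r_closed)
    moreover have "x \<otimes> a \<in> carrier (corner_ring R e)" "a \<otimes> x \<in> carrier (corner_ring R e)"
      using a x C.m_closed by auto
    ultimately show "x \<otimes>\<^bsub>corner_ring R e\<^esub> a \<in> J \<inter> carrier (corner_ring R e)"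
      "a \<otimes>\<^bsub>corner_ring R e\<^esub> x \<in> J \<inter> carrier (corner_ring R e)"
      by simp_all
  qed
qed

lemma ideal_corner_sandwich:
  assumes e: "e \<in> carrier R" "e \<otimes> e = e" and K: "ideal K (corner_ring R e)"
  defines "T \<equiv> {y \<in> carrier R. \<forall>a\<in>carrier R. \<forall>b\<in>carrier R. e \<otimes> a \<otimes> y \<otimes> b \<otimes> e \<in> K}"
  shows "ideal T R"
proof -
  interpret K: ideal K "corner_ring R e" by (rule K)
  show ?thesis
  proof (rule idealI[OF ring_axioms])
    show "subgroup T (add_monoid R)"
    proof (rule add.subgroupI)
      show "T \<subseteq> carrier R" "T \<noteq> {}"
        using e additive_subgroup.zero_closed[OF K.is_additive_subgroup]
      by (auto simp: T_def intro!: exI[of _ \<zero>])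
    next
      fix y assume y: "y \<in> T"
      have "e \<otimes> a \<otimes> \<ominus> y \<otimes> b \<otimes> e = \<ominus>\<^bsub>corner_ring R e\<^esub> (e \<otimes> a \<otimes> y \<otimes> b \<otimes> e)"
        if "a \<in> carrier R" "b \<in> carrier R" for a b
        using that y e K.a_Hcarr[of "e \<otimes> a \<otimes> y \<otimes> b \<otimes> e"]
        by (simp add: T_def corner_ring_minus l_minus r_minus)
      with y show "\<ominus> y \<in> T"
        by (simp add: T_def)
    next
      fix y z assume "y \<in> T" "z \<in> T"
      then show "y \<oplus> z \<in> T"
        using e additive_subgroup.a_closed[OF K.is_additive_subgroup] by (simp add: T_def l_distr r_distr)
    qed
  next
    fix y x assume "y \<in> T" and x: "x \<in> carrier R"
    then have y: "y \<in> carrier R"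
      and yT: "\<And>a b. a \<in> carrier R \<Longrightarrow> b \<in> carrier R \<Longrightarrow> e \<otimes> a \<otimes> y \<otimes> b \<otimes> e \<in> K"
      by (auto simp: T_def)
    have "e \<otimes> a \<otimes> (x \<otimes> y) \<otimes> b \<otimes> e = e \<otimes> (a \<otimes> x) \<otimes> y \<otimes> b \<otimes> e"
      "e \<otimes> a \<otimes> (y \<otimes> x) \<otimes> b \<otimes> e = e \<otimes> a \<otimes> y \<otimes> (x \<otimes> b) \<otimes> e"
      if "a \<in> carrier R" "b \<in> carrier R" for a b
      using that x y e by (simp_all add: m_assoc)
    with x y yT show "x \<otimes> y \<in> T" "y \<otimes> x \<in> T"
      by (simp_all add: T_def)
  qed
qed

(* For X inside the corner e R e, the corner of the ideal generated by X is
   e (R X R) e = (e R e) X (e R e). *)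
lemma genideal_Int_corner_ring_subset:
  assumes e: "e \<in> carrier R" "e \<otimes> e = e"
    and X: "X \<subseteq> carrier (corner_ring R e)" and K: "ideal K (corner_ring R e)" "X \<subseteq> K"
  shows "genideal R X \<inter> carrier (corner_ring R e) \<subseteq> K"
proof -
  interpret K: ideal K "corner_ring R e" by (rule K(1))
  define T where "T = {y \<in> carrier R. \<forall>a\<in>carrier R. \<forall>b\<in>carrier R. e \<otimes> a \<otimes> y \<otimes> b \<otimes> e \<in> K}"
  have "ideal T R"
    unfolding T_def by (rule ideal_corner_sandwich[OF e K(1)])
  moreover have "X \<subseteq> T"
  proof
    fix y assume "y \<in> X"
    then obtain w where w: "w \<in> carrier R" "y = e \<otimes> w \<otimes> e" and yK: "y \<in> K"
      using X K(2) by (auto simp: corner_ring_def)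
    have "e \<otimes> a \<otimes> y \<otimes> b \<otimes> e \<in> K" if "a \<in> carrier R" "b \<in> carrier R" for a b
    proof -
      have "e \<otimes> a \<otimes> e \<in> carrier (corner_ring R e)" "e \<otimes> b \<otimes> e \<in> carrier (corner_ring R e)"
        using that e by (auto simp: corner_ring_def)
      then have "(e \<otimes> a \<otimes> e) \<otimes> y \<otimes> (e \<otimes> b \<otimes> e) \<in> K"
        using yK K.I_l_closed K.I_r_closed by simp
      moreover have "(e \<otimes> a \<otimes> e) \<otimes> y \<otimes> (e \<otimes> b \<otimes> e) = e \<otimes> a \<otimes> y \<otimes> b \<otimes> e"
        using that e w by (simp add: m_assoc idem_mult_left)
      ultimately show ?thesis by simp
    qed
    with w e show "y \<in> T" by (simp add: T_def)
  qed
  ultimately have "genideal R X \<subseteq> T"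
    by (rule genideal_minimal)
  then show ?thesis
    using e by (auto simp: T_def corner_ring_carrier_iff dest!: bspec[of _ _ \<one>])
qed

end

lemma carrier_FactRing: "carrier (R Quot I) = {I +>\<^bsub>R\<^esub> x | x. x \<in> carrier R}"
  by (auto simp: FactRing_def A_RCOSETS_def')

lemma (in ideal) FactRing_rcos_ops:
  assumes "x \<in> carrier R" "y \<in> carrier R"
  shows "(I +> x) \<otimes>\<^bsub>R Quot I\<^esub> (I +> y) = I +> (x \<otimes> y)"
    "(I +> x) \<oplus>\<^bsub>R Quot I\<^esub> (I +> y) = I +> (x \<oplus> y)"
  using assms by (simp_all add: FactRing_def rcoset_mult_add a_rcos_sum)

lemma FactRing_one_zero: "\<one>\<^bsub>R Quot I\<^esub> = I +>\<^bsub>R\<^esub> \<one>\<^bsub>R\<^esub>" "\<zero>\<^bsub>R Quot I\<^esub> = I"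
  by (simp_all add: FactRing_def)

locale iso_onto_corner =
  R: ring R + S: ring S for R :: "('a, 'c) ring_scheme" and S :: "('b, 'd) ring_scheme" +
  fixes e :: 'b and \<theta> :: "'a \<Rightarrow> 'b"
  assumes idem_closed: "e \<in> carrier S" and idem: "e \<otimes>\<^bsub>S\<^esub> e = e"
    and iso: "\<theta> \<in> ring_iso R (corner_ring S e)"
begin

sublocale C: ring "corner_ring S e"
  by (rule S.ring_corner_ring[OF idem_closed idem])

sublocale \<theta>: ring_hom_ring R "corner_ring S e" \<theta>
  using iso by (intro ring_hom_ringI2 R.ring_axioms C.ring_axioms) (simp add: ring_iso_def)

lemma image_in_corner: "x \<in> carrier R \<Longrightarrow> \<theta> x \<in> carrier S \<and> e \<otimes>\<^bsub>S\<^esub> \<theta> x \<otimes>\<^bsub>S\<^esub> e = \<theta> x"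
  using \<theta>.hom_closed S.corner_ring_carrier_iff[OF idem_closed idem] by blast

lemma genideal_image_iff:
  assumes G: "G \<subseteq> carrier R" and x: "x \<in> carrier R"
  shows "\<theta> x \<in> genideal S (\<theta> ` G) \<longleftrightarrow> x \<in> genideal R G"
proof -
  define \<psi> where "\<psi> = inv_into (carrier R) \<theta>"
  interpret \<psi>: ring_hom_ring "corner_ring S e" R \<psi>
    using ring_iso_set_sym[OF R.ring_axioms iso] unfolding \<psi>_def
    by (intro ring_hom_ringI2 R.ring_axioms C.ring_axioms) (simp add: ring_iso_def)
  have inj: "inj_on \<theta> (carrier R)"
    using iso by (simp add: ring_iso_def bij_betw_def)
  have \<theta>G: "\<theta> ` G \<subseteq> carrier (corner_ring S e)" "\<theta> ` G \<subseteq> carrier S"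
    using G image_in_corner by auto
  interpret J: ideal "genideal S (\<theta> ` G)" S by (rule S.genideal_ideal[OF \<theta>G(2)])
  interpret I: ideal "genideal R G" R by (rule R.genideal_ideal[OF G])
  show ?thesis
  proof
    define K where "K = {y \<in> carrier (corner_ring S e). \<psi> y \<in> genideal R G}"
    have "ideal K (corner_ring S e)"
      unfolding K_def by (rule \<psi>.ideal_vimage[OF I.is_ideal])
    moreover have "\<theta> ` G \<subseteq> K"
      using G inj R.genideal_self[OF G] by (auto simp: K_def \<psi>_def)
    ultimately have "genideal S (\<theta> ` G) \<inter> carrier (corner_ring S e) \<subseteq> K"
      by (intro S.genideal_Int_corner_ring_subset[OF idem_closed idem \<theta>G(1)])
    moreover assume "\<theta> x \<in> genideal S (\<theta> ` G)"
    ultimately show "x \<in> genideal R G"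
      using x inj by (auto simp: K_def \<psi>_def)
  next
    let ?K = "{y \<in> carrier R. \<theta> y \<in> genideal S (\<theta> ` G) \<inter> carrier (corner_ring S e)}"
    have "ideal ?K R"
      by (rule \<theta>.ideal_vimage[OF S.ideal_Int_corner_ring[OF idem_closed idem J.is_ideal]])
    moreover have "G \<subseteq> ?K"
      using G S.genideal_self[OF \<theta>G(2)] by auto
    ultimately have "genideal R G \<subseteq> ?K"
      by (rule R.genideal_minimal)
    moreover assume "x \<in> genideal R G"
    ultimately show "\<theta> x \<in> genideal S (\<theta> ` G)"
      by blast
  qed
qed

context
  fixes G J
  assumes G: "G \<subseteq> carrier R"
  defines "J \<equiv> genideal S (\<theta> ` G)"
begin

interpretation J: ideal J S
  unfolding J_def using G image_in_corner by (intro S.genideal_ideal) auto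

interpretation Q: ring "S Quot J"
  by (rule J.quotient_is_ring)

lemma rcos_idem:
  "J +>\<^bsub>S\<^esub> e \<in> carrier (S Quot J)" "(J +>\<^bsub>S\<^esub> e) \<otimes>\<^bsub>S Quot J\<^esub> (J +>\<^bsub>S\<^esub> e) = J +>\<^bsub>S\<^esub> e"
  using idem_closed idem by (auto simp: carrier_FactRing J.FactRing_rcos_ops)

lemma rcos_sandwich:
  "y \<in> carrier S \<Longrightarrow> (J +>\<^bsub>S\<^esub> e) \<otimes>\<^bsub>S Quot J\<^esub> (J +>\<^bsub>S\<^esub> y) \<otimes>\<^bsub>S Quot J\<^esub> (J +>\<^bsub>S\<^esub> e) =
    J +>\<^bsub>S\<^esub> (e \<otimes>\<^bsub>S\<^esub> y \<otimes>\<^bsub>S\<^esub> e)"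
  using idem_closed by (simp add: J.FactRing_rcos_ops)

lemma quotient_map_ring_hom:
  "ring_hom_ring R (corner_ring (S Quot J) (J +>\<^bsub>S\<^esub> e)) (\<lambda>x. J +>\<^bsub>S\<^esub> \<theta> x)"
proof (rule ring_hom_ringI[OF R.ring_axioms Q.ring_corner_ring[OF rcos_idem]])
  fix x assume "x \<in> carrier R"
  then show "J +>\<^bsub>S\<^esub> \<theta> x \<in> carrier (corner_ring (S Quot J) (J +>\<^bsub>S\<^esub> e))"
    using image_in_corner rcos_idem rcos_sandwich
    by (auto simp: Q.corner_ring_carrier_iff carrier_FactRing)
next
  fix x y assume "x \<in> carrier R" "y \<in> carrier R"
  then show "J +>\<^bsub>S\<^esub> \<theta> (x \<otimes>\<^bsub>R\<^esub> y) =
      (J +>\<^bsub>S\<^esub> \<theta> x) \<otimes>\<^bsub>corner_ring (S Quot J) (J +>\<^bsub>S\<^esub> e)\<^esub> (J +>\<^bsub>S\<^esub> \<theta> y)"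
    "J +>\<^bsub>S\<^esub> \<theta> (x \<oplus>\<^bsub>R\<^esub> y) =
      (J +>\<^bsub>S\<^esub> \<theta> x) \<oplus>\<^bsub>corner_ring (S Quot J) (J +>\<^bsub>S\<^esub> e)\<^esub> (J +>\<^bsub>S\<^esub> \<theta> y)"
    using image_in_corner by (simp_all add: J.FactRing_rcos_ops)
qed simp

lemma quotient_map_surj:
  "(\<lambda>x. J +>\<^bsub>S\<^esub> \<theta> x) ` carrier R = carrier (corner_ring (S Quot J) (J +>\<^bsub>S\<^esub> e))"
proof
  show "carrier (corner_ring (S Quot J) (J +>\<^bsub>S\<^esub> e)) \<subseteq> (\<lambda>x. J +>\<^bsub>S\<^esub> \<theta> x) ` carrier R"
  proof
    fix Z assume "Z \<in> carrier (corner_ring (S Quot J) (J +>\<^bsub>S\<^esub> e))"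
    then obtain y where y: "y \<in> carrier S" "Z = J +>\<^bsub>S\<^esub> (e \<otimes>\<^bsub>S\<^esub> y \<otimes>\<^bsub>S\<^esub> e)"
      using rcos_sandwich by (auto simp: Q.corner_ring_carrier_iff[OF rcos_idem] carrier_FactRing)
    moreover have "e \<otimes>\<^bsub>S\<^esub> y \<otimes>\<^bsub>S\<^esub> e \<in> \<theta> ` carrier R"
      using y(1) iso by (auto simp: ring_iso_def bij_betw_def corner_ring_def)
    ultimately show "Z \<in> (\<lambda>x. J +>\<^bsub>S\<^esub> \<theta> x) ` carrier R"
      by auto
  qed
qed (use ring_hom_closed[OF ring_hom_ring.homh[OF quotient_map_ring_hom]] in auto)

lemma kernel_quotient_map:
  "a_kernel R (corner_ring (S Quot J) (J +>\<^bsub>S\<^esub> e)) (\<lambda>x. J +>\<^bsub>S\<^esub> \<theta> x) = genideal R G"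
proof -
  have "J +>\<^bsub>S\<^esub> \<theta> x = J \<longleftrightarrow> x \<in> genideal R G" if x: "x \<in> carrier R" for x
  proof -
    have "J +>\<^bsub>S\<^esub> \<theta> x = J \<longleftrightarrow> \<theta> x \<in> J"
    proof
      assume "J +>\<^bsub>S\<^esub> \<theta> x = J"
      then show "\<theta> x \<in> J"
        using J.a_rcos_self image_in_corner[OF x] by metis
    qed (rule J.a_rcos_const)
    also have "\<dots> \<longleftrightarrow> x \<in> genideal R G"
      unfolding J_def by (rule genideal_image_iff[OF G x])
    finally show ?thesis .
  qed
  moreover have "a_kernel R (corner_ring (S Quot J) (J +>\<^bsub>S\<^esub> e)) (\<lambda>x. J +>\<^bsub>S\<^esub> \<theta> x) =
      {x \<in> carrier R. J +>\<^bsub>S\<^esub> \<theta> x = J}"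
    by (simp only: a_kernel_def' corner_ring_simps FactRing_one_zero)
  moreover have "genideal R G \<subseteq> carrier R"
    using R.genideal_ideal[OF G] by (simp add: ideal.Icarr subsetI)
  ultimately show ?thesis
    by auto
qed

theorem corner_quotient_iso:
  "\<exists>\<phi>. \<phi> \<in> ring_iso (R Quot genideal R G) (corner_ring (S Quot J) (J +>\<^bsub>S\<^esub> e)) \<and>
     (\<forall>x\<in>carrier R. \<phi> (genideal R G +>\<^bsub>R\<^esub> x) = J +>\<^bsub>S\<^esub> \<theta> x)"
proof (intro exI conjI ballI)
  show "(\<lambda>X. the_elem ((\<lambda>x. J +>\<^bsub>S\<^esub> \<theta> x) ` X)) \<in>
      ring_iso (R Quot genideal R G) (corner_ring (S Quot J) (J +>\<^bsub>S\<^esub> e))"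
    using ring_hom_ring.FactRing_iso_set[OF quotient_map_ring_hom quotient_map_surj]
    by (simp only: kernel_quotient_map)
  show "the_elem ((\<lambda>x. J +>\<^bsub>S\<^esub> \<theta> x) ` (genideal R G +>\<^bsub>R\<^esub> x)) = J +>\<^bsub>S\<^esub> \<theta> x"
    if "x \<in> carrier R" for x
    using ring_hom_ring.the_elem_simp[OF quotient_map_ring_hom that]
    by (simp only: kernel_quotient_map)
qed

end

end

section \<open>Paths and the path algebra\<close>

fun walk :: "'v set \<Rightarrow> 'a set \<Rightarrow> ('a \<Rightarrow> 'v) \<Rightarrow> ('a \<Rightarrow> 'v) \<Rightarrow> 'v \<Rightarrow> 'a list \<Rightarrow> bool" where
  "walk V E s t v [] \<longleftrightarrow> v \<in> V"
| "walk V E s t v (a # as) \<longleftrightarrow> v \<in> V \<and> a \<in> E \<and> s a = v \<and> walk V E s t (t a) as"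

lemma walk_start: "walk V E s t v xs \<Longrightarrow> v \<in> V"
  by (cases xs) auto

lemma path_end_Nil [simp]: "path_end t (v, []) = v"
  by (simp add: path_end_def)

lemma path_end_Cons [simp]: "path_end t (v, a # as) = path_end t (t a, as)"
  by (simp add: path_end_def)

lemma path_end_append: "path_end t (v, xs @ ys) = path_end t (path_end t (v, xs), ys)"
  by (induction xs arbitrary: v) auto

lemma path_end_path_cat: "path_end t p = fst q \<Longrightarrow> path_end t (path_cat p q) = path_end t q"
  by (cases p; cases q) (simp add: path_cat_def path_end_append)

lemma fst_path_cat [simp]: "fst (path_cat p q) = fst p"
  by (simp add: path_cat_def)

lemma path_cat_assoc: "path_cat (path_cat p q) r = path_cat p (path_cat q r)"
  by (simp add: path_cat_def)

lemma walk_append: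
  "walk V E s t v (xs @ ys) \<longleftrightarrow> walk V E s t v xs \<and> walk V E s t (path_end t (v, xs)) ys"
  by (induction xs arbitrary: v) (auto dest: walk_start)

lemma walk_end: "walk V E s t v xs \<Longrightarrow> path_end t (v, xs) \<in> V"
  by (induction xs arbitrary: v) auto

lemma valid_path_iff_walk:
  assumes "\<forall>\<alpha>\<in>E. t \<alpha> \<in> V"
  shows "valid_path V E s t (v, xs) \<longleftrightarrow> walk V E s t v xs"
proof (induction xs arbitrary: v)
  case Nil
  then show ?case by (simp add: valid_path_def)
next
  case (Cons a as)
  have "valid_path V E s t (v, a # as) \<longleftrightarrow> v \<in> V \<and> a \<in> E \<and> s a = v \<and> valid_path V E s t (t a, as)"
    using assms by (cases as) (auto simp: valid_path_def nth_Cons split: nat.splits)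
  with Cons.IH show ?case by simp
qed

lemma pa_mult_eq_sum_over:
  assumes "finite T" "finite {p. f p \<noteq> 0}" "finite {q. g q \<noteq> 0}"
    and "\<And>p q. f p \<noteq> 0 \<Longrightarrow> g q \<noteq> 0 \<Longrightarrow> path_end t p = fst q \<Longrightarrow> path_cat p q = r \<Longrightarrow> (p, q) \<in> T"
  shows "pa_mult t f g r =
    (\<Sum>(p, q)\<in>T. if path_end t p = fst q \<and> path_cat p q = r then f p * g q else 0)"
  (is "_ = sum ?F T")
proof -
  have "pa_mult t f g r = sum ?F ({p. f p \<noteq> 0} \<times> {q. g q \<noteq> 0})"
    by (simp add: pa_mult_def)
  also have "\<dots> = sum ?F ({p. f p \<noteq> 0} \<times> {q. g q \<noteq> 0} \<union> T)"
    by (rule sum.mono_neutral_left) (use assms in \<open>auto split: if_splits\<close>)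
  also have "\<dots> = sum ?F T"
    by (rule sum.mono_neutral_right) (use assms in \<open>auto split: if_splits\<close>)
  finally show ?thesis .
qed

lemma pa_mult_eq_sum:
  assumes "finite P" "finite Q" "{p. f p \<noteq> 0} \<subseteq> P" "{q. g q \<noteq> 0} \<subseteq> Q"
  shows "pa_mult t f g r =
    (\<Sum>p\<in>P. \<Sum>q\<in>Q. if path_end t p = fst q \<and> path_cat p q = r then f p * g q else 0)"
  using assms
  by (subst pa_mult_eq_sum_over[where T = "P \<times> Q"])
     (auto intro: finite_subset simp: sum.cartesian_product)

lemma pa_mult_nonzeroE:
  assumes "pa_mult t f g r \<noteq> 0"
  obtains p q where "f p \<noteq> 0" "g q \<noteq> 0" "path_end t p = fst q" "r = path_cat p q"
proof -
  from assms obtain pq where "pq \<in> {p. f p \<noteq> 0} \<times> {q. g q \<noteq> 0}"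
    "(\<lambda>(p, q). if path_end t p = fst q \<and> path_cat p q = r then f p * g q else 0) pq \<noteq> 0"
    unfolding pa_mult_def by (meson sum.not_neutral_contains_not_neutral)
  with that show ?thesis by (cases pq) (auto split: if_splits)
qed

lemma pa_mult_support:
  "{r. pa_mult t f g r \<noteq> 0} \<subseteq> (\<lambda>(p, q). path_cat p q) ` ({p. f p \<noteq> 0} \<times> {q. g q \<noteq> 0})"
  by (auto elim!: pa_mult_nonzeroE)

lemma finite_pa_mult_support:
  "finite {p. f p \<noteq> 0} \<Longrightarrow> finite {q. g q \<noteq> 0} \<Longrightarrow> finite {r. pa_mult t f g r \<noteq> 0}"
  by (rule finite_subset[OF pa_mult_support]) auto

lemma sum_swap3:
  "(\<Sum>s\<in>C. \<Sum>a\<in>X. \<Sum>b\<in>Y. F s a b) = (\<Sum>a\<in>X. \<Sum>b\<in>Y. \<Sum>s\<in>C. F s a b)"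
  by (subst sum.swap) (rule sum.cong[OF refl], rule sum.swap)

lemma sum_swap4:
  "(\<Sum>s\<in>C. \<Sum>c\<in>Z. \<Sum>a\<in>X. \<Sum>b\<in>Y. F s c a b) = (\<Sum>a\<in>X. \<Sum>b\<in>Y. \<Sum>c\<in>Z. \<Sum>s\<in>C. F s c a b)"
proof -
  have "(\<Sum>s\<in>C. \<Sum>c\<in>Z. \<Sum>a\<in>X. \<Sum>b\<in>Y. F s c a b) = (\<Sum>s\<in>C. \<Sum>a\<in>X. \<Sum>b\<in>Y. \<Sum>c\<in>Z. F s c a b)"
    by (rule sum.cong[OF refl], rule sum_swap3)
  also have "\<dots> = (\<Sum>a\<in>X. \<Sum>b\<in>Y. \<Sum>c\<in>Z. \<Sum>s\<in>C. F s c a b)"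
    by (subst sum_swap3) (intro sum.cong refl sum.swap)
  finally show ?thesis .
qed

lemma pa_mult_assoc_expand_left:
  fixes f g h :: "'v \<times> 'a list \<Rightarrow> 'k::field"
  assumes fin: "finite {p. f p \<noteq> 0}" "finite {p. g p \<noteq> 0}" "finite {p. h p \<noteq> 0}"
  shows "pa_mult t (pa_mult t f g) h r =
    (\<Sum>p1\<in>{p. f p \<noteq> 0}. \<Sum>p2\<in>{p. g p \<noteq> 0}. \<Sum>p3\<in>{p. h p \<noteq> 0}.
       if path_end t p1 = fst p2 \<and> path_end t p2 = fst p3 \<and> path_cat p1 (path_cat p2 p3) = r
       then f p1 * g p2 * h p3 else 0)"
    (is "_ = (\<Sum>p1\<in>?S1. \<Sum>p2\<in>?S2. \<Sum>p3\<in>?S3. ?F p1 p2 p3)")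
proof -
  define C where "C = (\<lambda>(p, q). path_cat p q) ` (?S1 \<times> ?S2)"
  have C: "finite C" "{s. pa_mult t f g s \<noteq> 0} \<subseteq> C"
    using fin pa_mult_support[of t f g] unfolding C_def by auto
  have "pa_mult t (pa_mult t f g) h r = (\<Sum>s\<in>C. \<Sum>p3\<in>?S3.
      if path_end t s = fst p3 \<and> path_cat s p3 = r then pa_mult t f g s * h p3 else 0)"
    using C fin by (intro pa_mult_eq_sum) auto
  also have "\<dots> = (\<Sum>s\<in>C. \<Sum>p3\<in>?S3. \<Sum>p1\<in>?S1. \<Sum>p2\<in>?S2.
      if s = path_cat p1 p2 then ?F p1 p2 p3 else 0)"
  proof (intro sum.cong refl)
    fix s p3
    have "pa_mult t f g s = (\<Sum>p1\<in>?S1. \<Sum>p2\<in>?S2.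
        if path_end t p1 = fst p2 \<and> path_cat p1 p2 = s then f p1 * g p2 else 0)"
      using fin by (intro pa_mult_eq_sum) auto
    then show "(if path_end t s = fst p3 \<and> path_cat s p3 = r then pa_mult t f g s * h p3 else 0) =
        (\<Sum>p1\<in>?S1. \<Sum>p2\<in>?S2. if s = path_cat p1 p2 then ?F p1 p2 p3 else 0)"
      by (cases "path_end t s = fst p3 \<and> path_cat s p3 = r")
         (auto simp: sum_distrib_right path_end_path_cat path_cat_assoc intro!: sum.cong sum.neutral)
  qed
  also have "\<dots> = (\<Sum>p1\<in>?S1. \<Sum>p2\<in>?S2. \<Sum>p3\<in>?S3. \<Sum>s\<in>C.
      if s = path_cat p1 p2 then ?F p1 p2 p3 else 0)"
    by (rule sum_swap4)
  also have "\<dots> = (\<Sum>p1\<in>?S1. \<Sum>p2\<in>?S2. \<Sum>p3\<in>?S3. ?F p1 p2 p3)"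
    using C(1) by (intro sum.cong refl) (auto simp: C_def)
  finally show ?thesis .
qed

lemma pa_mult_assoc_expand_right:
  fixes f g h :: "'v \<times> 'a list \<Rightarrow> 'k::field"
  assumes fin: "finite {p. f p \<noteq> 0}" "finite {p. g p \<noteq> 0}" "finite {p. h p \<noteq> 0}"
  shows "pa_mult t f (pa_mult t g h) r =
    (\<Sum>p1\<in>{p. f p \<noteq> 0}. \<Sum>p2\<in>{p. g p \<noteq> 0}. \<Sum>p3\<in>{p. h p \<noteq> 0}.
       if path_end t p1 = fst p2 \<and> path_end t p2 = fst p3 \<and> path_cat p1 (path_cat p2 p3) = r
       then f p1 * g p2 * h p3 else 0)"
    (is "_ = (\<Sum>p1\<in>?S1. \<Sum>p2\<in>?S2. \<Sum>p3\<in>?S3. ?F p1 p2 p3)")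
proof -
  define D where "D = (\<lambda>(p, q). path_cat p q) ` (?S2 \<times> ?S3)"
  have D: "finite D" "{s. pa_mult t g h s \<noteq> 0} \<subseteq> D"
    using fin pa_mult_support[of t g h] unfolding D_def by auto
  have "pa_mult t f (pa_mult t g h) r = (\<Sum>p1\<in>?S1. \<Sum>s\<in>D.
      if path_end t p1 = fst s \<and> path_cat p1 s = r then f p1 * pa_mult t g h s else 0)"
    using D fin by (intro pa_mult_eq_sum) auto
  also have "\<dots> = (\<Sum>p1\<in>?S1. \<Sum>s\<in>D. \<Sum>p2\<in>?S2. \<Sum>p3\<in>?S3.
      if s = path_cat p2 p3 then ?F p1 p2 p3 else 0)"
  proof (intro sum.cong refl)
    fix p1 s
    have "pa_mult t g h s = (\<Sum>p2\<in>?S2. \<Sum>p3\<in>?S3.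
        if path_end t p2 = fst p3 \<and> path_cat p2 p3 = s then g p2 * h p3 else 0)"
      using fin by (intro pa_mult_eq_sum) auto
    then show "(if path_end t p1 = fst s \<and> path_cat p1 s = r then f p1 * pa_mult t g h s else 0) =
        (\<Sum>p2\<in>?S2. \<Sum>p3\<in>?S3. if s = path_cat p2 p3 then ?F p1 p2 p3 else 0)"
      by (cases "path_end t p1 = fst s \<and> path_cat p1 s = r")
         (auto simp: sum_distrib_left mult.assoc path_end_path_cat path_cat_assoc intro!: sum.cong sum.neutral)
  qed
  also have "\<dots> = (\<Sum>p1\<in>?S1. \<Sum>p2\<in>?S2. \<Sum>p3\<in>?S3. \<Sum>s\<in>D.
      if s = path_cat p2 p3 then ?F p1 p2 p3 else 0)"
    by (rule sum.cong[OF refl], rule sum_swap3)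
  also have "\<dots> = (\<Sum>p1\<in>?S1. \<Sum>p2\<in>?S2. \<Sum>p3\<in>?S3. ?F p1 p2 p3)"
    using D(1) by (intro sum.cong refl) (auto simp: D_def)
  finally show ?thesis .
qed

lemma pa_mult_assoc:
  "finite {p. f p \<noteq> 0} \<Longrightarrow> finite {p. g p \<noteq> 0} \<Longrightarrow> finite {p. h p \<noteq> 0} \<Longrightarrow>
    pa_mult t (pa_mult t f g) h = pa_mult t f (pa_mult t g h)"
  by (simp add: fun_eq_iff pa_mult_assoc_expand_left pa_mult_assoc_expand_right)

lemma pa_mult_add_left:
  assumes "finite {p. f p \<noteq> 0}" "finite {p. g p \<noteq> 0}" "finite {p. h p \<noteq> 0}"
  shows "pa_mult t (\<lambda>p. f p + g p) h = (\<lambda>r. pa_mult t f h r + pa_mult t g h r)"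
proof
  fix r
  let ?P = "{p. f p \<noteq> 0} \<union> {p. g p \<noteq> 0}" and ?Q = "{p. h p \<noteq> 0}"
  let ?c = "\<lambda>p q. path_end t p = fst q \<and> path_cat p q = r"
  have "pa_mult t (\<lambda>p. f p + g p) h r = (\<Sum>p\<in>?P. \<Sum>q\<in>?Q. if ?c p q then (f p + g p) * h q else 0)"
    "pa_mult t f h r = (\<Sum>p\<in>?P. \<Sum>q\<in>?Q. if ?c p q then f p * h q else 0)"
    "pa_mult t g h r = (\<Sum>p\<in>?P. \<Sum>q\<in>?Q. if ?c p q then g p * h q else 0)"
    using assms by (auto intro!: pa_mult_eq_sum)
  then show "pa_mult t (\<lambda>p. f p + g p) h r = pa_mult t f h r + pa_mult t g h r"
    by (simp add: sum.distrib[symmetric]) (intro sum.cong refl, simp add: distrib_right)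
qed

lemma pa_mult_add_right:
  assumes "finite {p. f p \<noteq> 0}" "finite {p. g p \<noteq> 0}" "finite {p. h p \<noteq> 0}"
  shows "pa_mult t h (\<lambda>p. f p + g p) = (\<lambda>r. pa_mult t h f r + pa_mult t h g r)"
proof
  fix r
  let ?P = "{p. h p \<noteq> 0}" and ?Q = "{p. f p \<noteq> 0} \<union> {p. g p \<noteq> 0}"
  let ?c = "\<lambda>p q. path_end t p = fst q \<and> path_cat p q = r"
  have "pa_mult t h (\<lambda>p. f p + g p) r = (\<Sum>p\<in>?P. \<Sum>q\<in>?Q. if ?c p q then h p * (f q + g q) else 0)"
    "pa_mult t h f r = (\<Sum>p\<in>?P. \<Sum>q\<in>?Q. if ?c p q then h p * f q else 0)"
    "pa_mult t h g r = (\<Sum>p\<in>?P. \<Sum>q\<in>?Q. if ?c p q then h p * g q else 0)"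
    using assms by (auto intro!: pa_mult_eq_sum)
  then show "pa_mult t h (\<lambda>p. f p + g p) r = pa_mult t h f r + pa_mult t h g r"
    by (simp add: sum.distrib[symmetric]) (intro sum.cong refl, simp add: distrib_left)
qed

lemma pa_mult_smult_left:
  assumes "finite {p. f p \<noteq> 0}" "finite {p. g p \<noteq> 0}"
  shows "pa_mult t (\<lambda>p. c * f p) g = (\<lambda>r. c * pa_mult t f g r)"
proof
  fix r
  let ?P = "{p. f p \<noteq> 0}" and ?Q = "{p. g p \<noteq> 0}"
  let ?c = "\<lambda>p q. path_end t p = fst q \<and> path_cat p q = r"
  have "pa_mult t (\<lambda>p. c * f p) g r = (\<Sum>p\<in>?P. \<Sum>q\<in>?Q. if ?c p q then c * f p * g q else 0)"
    "pa_mult t f g r = (\<Sum>p\<in>?P. \<Sum>q\<in>?Q. if ?c p q then f p * g q else 0)"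
    using assms by (auto intro!: pa_mult_eq_sum)
  then show "pa_mult t (\<lambda>p. c * f p) g r = c * pa_mult t f g r"
    by (simp add: sum_distrib_left) (intro sum.cong refl, simp add: mult.assoc)
qed

(* The sum of the trivial paths at the vertices in W: the unit of KQ is vertex_idem V, and
   epsilon is vertex_idem (Inl ` V). *)
definition vertex_idem :: "'v set \<Rightarrow> 'v \<times> 'a list \<Rightarrow> 'k::field" where
  "vertex_idem W p = (if snd p = [] \<and> fst p \<in> W then 1 else 0)"

lemma vertex_idem_support: "{p. vertex_idem W p \<noteq> 0} = (\<lambda>v. (v, [])) ` W"
  by (auto simp: vertex_idem_def)

lemma finite_vertex_idem_support: "finite W \<Longrightarrow> finite {p. vertex_idem W p \<noteq> 0}"
  by (simp add: vertex_idem_support)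

lemma pa_mult_vertex_idem_left:
  assumes "finite W" "finite {q. y q \<noteq> 0}"
  shows "pa_mult t (vertex_idem W) y r = (if fst r \<in> W then y r else 0)"
proof -
  have "pa_mult t (vertex_idem W) y r = (\<Sum>(p, q)\<in>{((fst r, []), r)}.
      if path_end t p = fst q \<and> path_cat p q = r then vertex_idem W p * y q else 0)"
    using assms by (intro pa_mult_eq_sum_over finite_vertex_idem_support)
      (auto simp: path_cat_def vertex_idem_def split: if_splits)
  then show ?thesis by (simp add: path_cat_def vertex_idem_def)
qed

lemma pa_mult_vertex_idem_right:
  assumes "finite W" "finite {q. y q \<noteq> 0}"
  shows "pa_mult t y (vertex_idem W) r = (if path_end t r \<in> W then y r else 0)"
proof -
  have "pa_mult t y (vertex_idem W) r = (\<Sum>(p, q)\<in>{(r, (path_end t r, []))}.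
      if path_end t p = fst q \<and> path_cat p q = r then y p * vertex_idem W q else 0)"
    using assms by (intro pa_mult_eq_sum_over finite_vertex_idem_support)
      (auto simp: path_cat_def vertex_idem_def split: if_splits)
  then show ?thesis by (simp add: path_cat_def vertex_idem_def)
qed

lemma path_algebra_simps [simp]:
  "x \<otimes>\<^bsub>path_algebra V E s t\<^esub> y = pa_mult t x y"
  "x \<oplus>\<^bsub>path_algebra V E s t\<^esub> y = (\<lambda>p. x p + (y p :: 'k::field))"
  "\<zero>\<^bsub>path_algebra V E s t\<^esub> = (\<lambda>p. 0)"
  "\<one>\<^bsub>path_algebra V E s t\<^esub> = vertex_idem V"
  by (simp_all add: path_algebra_def vertex_idem_def[abs_def])

locale quiver =
  fixes V :: "'v set" and E :: "'a set" and src tgt :: "'a \<Rightarrow> 'v"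
  assumes finite_vertices: "finite V" and arrow_ends: "\<forall>\<alpha>\<in>E. src \<alpha> \<in> V \<and> tgt \<alpha> \<in> V"
begin

abbreviation KQ :: "('v \<times> 'a list \<Rightarrow> 'k::field) ring" where
  "KQ \<equiv> path_algebra V E src tgt"

lemma carrier_path_algebra_iff:
  "f \<in> carrier KQ \<longleftrightarrow> finite {p. f p \<noteq> 0} \<and> (\<forall>p. f p \<noteq> 0 \<longrightarrow> walk V E src tgt (fst p) (snd p))"
  using valid_path_iff_walk[of E tgt V src] arrow_ends by (simp add: path_algebra_def)

lemma ring_path_algebra: "ring (KQ :: ('v \<times> 'a list \<Rightarrow> 'k::field) ring)"
  (is "ring ?R")
proof (rule ringI)
  show "abelian_group ?R"
  proof (rule abelian_groupI)
    fix x y assume "x \<in> carrier ?R" "y \<in> carrier ?R"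
    moreover have "{p. x p + y p \<noteq> 0} \<subseteq> {p. x p \<noteq> 0} \<union> {p. y p \<noteq> 0}" by auto
    ultimately show "x \<oplus>\<^bsub>?R\<^esub> y \<in> carrier ?R"
      unfolding carrier_path_algebra_iff by (auto intro: finite_subset)
  next
    fix x assume "x \<in> carrier ?R"
    then show "\<exists>y\<in>carrier ?R. y \<oplus>\<^bsub>?R\<^esub> x = \<zero>\<^bsub>?R\<^esub>"
      by (intro bexI[of _ "\<lambda>p. - x p"]) (auto simp: carrier_path_algebra_iff)
  qed (auto simp: carrier_path_algebra_iff add.assoc add.commute)
  show "monoid ?R"
  proof (rule monoidI)
    fix x y assume x: "x \<in> carrier ?R" and y: "y \<in> carrier ?R"
    have "walk V E src tgt (fst r) (snd r)" if "pa_mult tgt x y r \<noteq> 0" for r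
      using that x y by (elim pa_mult_nonzeroE) (auto simp: carrier_path_algebra_iff path_cat_def walk_append)
    with x y show "x \<otimes>\<^bsub>?R\<^esub> y \<in> carrier ?R"
      by (auto simp: carrier_path_algebra_iff finite_pa_mult_support)
  next
    show "\<one>\<^bsub>?R\<^esub> \<in> carrier ?R"
      unfolding carrier_path_algebra_iff path_algebra_simps
      using finite_vertices by (simp add: vertex_idem_support) (simp add: vertex_idem_def)
  next
    fix x y z assume "x \<in> carrier ?R" "y \<in> carrier ?R" "z \<in> carrier ?R"
    then show "x \<otimes>\<^bsub>?R\<^esub> y \<otimes>\<^bsub>?R\<^esub> z = x \<otimes>\<^bsub>?R\<^esub> (y \<otimes>\<^bsub>?R\<^esub> z)"
      by (simp add: carrier_path_algebra_iff pa_mult_assoc)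
  next
    fix x assume "x \<in> carrier ?R"
    then show "\<one>\<^bsub>?R\<^esub> \<otimes>\<^bsub>?R\<^esub> x = x" "x \<otimes>\<^bsub>?R\<^esub> \<one>\<^bsub>?R\<^esub> = x"
      using finite_vertices arrow_ends
      by (auto simp: fun_eq_iff carrier_path_algebra_iff pa_mult_vertex_idem_left
          pa_mult_vertex_idem_right dest: walk_start walk_end)
  qed
qed (auto simp: carrier_path_algebra_iff pa_mult_add_left pa_mult_add_right)

lemma path_algebra_minus: "x \<in> carrier KQ \<Longrightarrow> \<ominus>\<^bsub>KQ\<^esub> x = (\<lambda>p. - x p)"
proof -
  interpret ring KQ by (rule ring_path_algebra)
  show "x \<in> carrier KQ \<Longrightarrow> \<ominus>\<^bsub>KQ\<^esub> x = (\<lambda>p. - x p)"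
    by (rule minus_equality) (auto simp: carrier_path_algebra_iff)
qed

lemma path_algebra_smult_closed: "x \<in> carrier KQ \<Longrightarrow> (\<lambda>p. c * x p) \<in> carrier KQ"
  by (auto simp: carrier_path_algebra_iff elim: rev_finite_subset)

lemma ideal_smult_closed:
  assumes "ideal I KQ" "x \<in> I"
  shows "(\<lambda>p. c * x p) \<in> I"
proof -
  interpret ideal I KQ by fact
  interpret ring KQ by (rule ring_path_algebra)
  have x: "x \<in> carrier KQ" using assms(2) a_Hcarr by blast
  have "(\<lambda>p. c * \<one>\<^bsub>KQ\<^esub> p) \<otimes>\<^bsub>KQ\<^esub> x = (\<lambda>r. c * (\<one>\<^bsub>KQ\<^esub> \<otimes>\<^bsub>KQ\<^esub> x) r)"
    using x finite_vertices
    by (simp add: pa_mult_smult_left carrier_path_algebra_iff finite_vertex_idem_support)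
  then have "(\<lambda>p. c * x p) = (\<lambda>p. c * \<one>\<^bsub>KQ\<^esub> p) \<otimes>\<^bsub>KQ\<^esub> x"
    using x l_one[OF x] by simp
  also have "\<dots> \<in> I"
    using assms(2) one_closed by (intro I_l_closed path_algebra_smult_closed) simp_all
  finally show ?thesis .
qed

(* quot_smult scales a representative chosen by SOME; the choice does not matter. *)
lemma quot_smult_rcos:
  assumes I: "ideal I KQ" and x: "x \<in> carrier KQ"
  shows "quot_smult KQ I c (I +>\<^bsub>KQ\<^esub> x) = I +>\<^bsub>KQ\<^esub> (\<lambda>p. c * x p)"
proof -
  interpret I: ideal I KQ by (rule I)
  define x0 where "x0 = (SOME y. y \<in> I +>\<^bsub>KQ\<^esub> x)"
  have "x0 \<in> I +>\<^bsub>KQ\<^esub> x"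
    unfolding x0_def using I.a_rcos_self[OF x] by (rule someI[where P = "\<lambda>y. y \<in> I +>\<^bsub>KQ\<^esub> x"])
  then have x0: "x0 \<in> carrier KQ" "x0 \<oplus>\<^bsub>KQ\<^esub> \<ominus>\<^bsub>KQ\<^esub> x \<in> I"
    using I.a_elemrcos_carrier[OF x] I.a_rcos_module_imp[OF x] by blast+
  then have "(\<lambda>p. c * (x0 \<oplus>\<^bsub>KQ\<^esub> \<ominus>\<^bsub>KQ\<^esub> x) p) \<in> I"
    by (intro ideal_smult_closed[OF I])
  moreover have "(\<lambda>p. c * (x0 \<oplus>\<^bsub>KQ\<^esub> \<ominus>\<^bsub>KQ\<^esub> x) p) = (\<lambda>p. c * x0 p) \<oplus>\<^bsub>KQ\<^esub> \<ominus>\<^bsub>KQ\<^esub> (\<lambda>p. c * x p)"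
    using x x0(1) path_algebra_smult_closed[OF x, of c]
    by (simp add: path_algebra_minus fun_eq_iff ring_distribs)
  ultimately have "(\<lambda>p. c * x0 p) \<in> I +>\<^bsub>KQ\<^esub> (\<lambda>p. c * x p)"
    by (intro I.a_rcos_module_rev path_algebra_smult_closed x x0(1)) simp
  then have "I +>\<^bsub>KQ\<^esub> (\<lambda>p. c * x p) = I +>\<^bsub>KQ\<^esub> (\<lambda>p. c * x0 p)"
    using path_algebra_smult_closed[OF x, of c] by (rule I.a_repr_independence')
  then show ?thesis
    by (simp add: quot_smult_def x0_def)
qed

end

section \<open>Stretching\<close>

definition stretched_arrow :: "nat \<Rightarrow> 'a \<Rightarrow> ('a \<times> nat) list" where
  "stretched_arrow A \<alpha> = map (\<lambda>j. (\<alpha>, j)) [1..<A + 1]"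

lemma theta_path_eq: "theta_path A p = (Inl (fst p), concat (map (stretched_arrow A) (snd p)))"
  by (simp add: theta_path_def stretched_arrow_def[abs_def] del: upt_Suc)

lemma length_stretched_arrow [simp]: "length (stretched_arrow A \<alpha>) = A"
  by (simp add: stretched_arrow_def)

lemma stretched_arrow_Cons:
  "1 \<le> A \<Longrightarrow> stretched_arrow A \<alpha> = (\<alpha>, 1) # map (\<lambda>j. (\<alpha>, j)) [2..<A + 1]"
  by (simp add: stretched_arrow_def upt_conv_Cons numeral_2_eq_2 del: upt_Suc)

lemma concat_stretched_arrow_inj:
  assumes "1 \<le> A" "concat (map (stretched_arrow A) xs) = concat (map (stretched_arrow A) ys)"
  shows "xs = ys"
  using assms(2)
proof (induction xs arbitrary: ys)
  case Nil
  then show ?case using assms(1) by (cases ys) (auto simp: stretched_arrow_Cons)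
next
  case (Cons a xs)
  then obtain b ys' where ys: "ys = b # ys'"
    using assms(1) by (cases ys) (auto simp: stretched_arrow_Cons)
  with Cons.prems have "stretched_arrow A a = stretched_arrow A b"
    and tail: "concat (map (stretched_arrow A) xs) = concat (map (stretched_arrow A) ys')"
    by (simp_all add: append_eq_append_conv)
  then have "a = b"
    using assms(1) by (simp add: stretched_arrow_Cons)
  moreover have "xs = ys'"
    by (rule Cons.IH[OF tail])
  ultimately show ?case
    using ys by simp
qed

lemma inj_theta_path: "1 \<le> A \<Longrightarrow> inj (theta_path A)"
  by (rule injI) (auto simp: theta_path_eq prod_eq_iff dest: concat_stretched_arrow_inj[rotated])

lemma fst_theta_path [simp]: "fst (theta_path A p) = Inl (fst p)"
  by (simp add: theta_path_eq)

lemma theta_path_path_cat: "theta_path A (path_cat p q) = path_cat (theta_path A p) (theta_path A q)"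
  by (simp add: theta_path_eq path_cat_def)

lemma path_end_stretched_arrow: "1 \<le> A \<Longrightarrow> path_end (st_tgt A tgt) (w, stretched_arrow A \<alpha>) = Inl (tgt \<alpha>)"
  by (simp add: path_end_def stretched_arrow_def last_map st_tgt_def del: upt_Suc)

lemma path_end_theta_path:
  assumes "1 \<le> A"
  shows "path_end (st_tgt A tgt) (theta_path A p) = Inl (path_end tgt p)"
proof -
  have "path_end (st_tgt A tgt) (Inl v, concat (map (stretched_arrow A) xs)) = Inl (path_end tgt (v, xs))" for v xs
    using assms by (induction xs arbitrary: v) (simp_all add: path_end_append path_end_stretched_arrow)
  then show ?thesis by (simp add: theta_path_eq)
qed

lemma theta_theta_path: "1 \<le> A \<Longrightarrow> theta A x (theta_path A p) = x p"
proof -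
  assume "1 \<le> A"
  then have "{p'. x p' \<noteq> 0 \<and> theta_path A p' = theta_path A p} = (if x p \<noteq> 0 then {p} else {})"
    using inj_theta_path by (auto dest: injD)
  then show ?thesis
    unfolding theta_def by simp
qed

lemma theta_outside_range: "q \<notin> range (theta_path A) \<Longrightarrow> theta A x q = 0"
proof -
  assume "q \<notin> range (theta_path A)"
  then have "{p. x p \<noteq> 0 \<and> theta_path A p = q} = {}" by auto
  then show ?thesis
    unfolding theta_def by (simp only: sum.empty)
qed

lemma theta_eqI:
  assumes "1 \<le> A" "\<And>p. y (theta_path A p) = x p" "\<And>q. q \<notin> range (theta_path A) \<Longrightarrow> y q = 0"
  shows "theta A x = y"
proof
  fix q show "theta A x q = y q"
    using assms by (cases "q \<in> range (theta_path A)") (auto simp: theta_theta_path theta_outside_range)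
qed

lemma inj_theta: "1 \<le> A \<Longrightarrow> inj (theta A)"
  by (rule injI) (metis ext theta_theta_path)

lemma theta_add: "1 \<le> A \<Longrightarrow> theta A (\<lambda>p. x p + y p) = (\<lambda>q. theta A x q + theta A y q)"
  by (rule theta_eqI) (simp_all add: theta_theta_path theta_outside_range)

lemma theta_smult: "1 \<le> A \<Longrightarrow> theta A (\<lambda>p. c * x p) = (\<lambda>q. c * theta A x q)"
  by (rule theta_eqI) (simp_all add: theta_theta_path theta_outside_range)

lemma theta_support:
  assumes "1 \<le> A"
  shows "{q. theta A x q \<noteq> 0} \<subseteq> theta_path A ` {p. x p \<noteq> 0}"
proof
  fix q assume "q \<in> {q. theta A x q \<noteq> 0}"
  moreover from this obtain p where "q = theta_path A p"
    using theta_outside_range by blast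
  ultimately show "q \<in> theta_path A ` {p. x p \<noteq> 0}"
    using assms by (simp add: theta_theta_path)
qed

lemma theta_path_eq_iff: "1 \<le> A \<Longrightarrow> theta_path A p = theta_path A q \<longleftrightarrow> p = q"
  using inj_theta_path by (auto dest: injD)

lemma pa_mult_theta_eq_sum:
  fixes x y :: "'v \<times> 'a list \<Rightarrow> 'k::field"
  assumes A: "1 \<le> A" and fin: "finite {p. x p \<noteq> 0}" "finite {p. y p \<noteq> 0}"
  shows "pa_mult (st_tgt A tgt) (theta A x) (theta A y) r = (\<Sum>p\<in>{p. x p \<noteq> 0}. \<Sum>q\<in>{p. y p \<noteq> 0}.
      if path_end tgt p = fst q \<and> theta_path A (path_cat p q) = r then x p * y q else 0)"
    (is "_ = (\<Sum>p\<in>?Sx. \<Sum>q\<in>?Sy. _)")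
proof -
  have inj: "inj_on (theta_path A) ?Sx" "inj_on (theta_path A) ?Sy"
    using inj_theta_path[OF A] by (auto intro: inj_on_subset)
  have t: "theta A x (theta_path A p) = x p" "theta A y (theta_path A p) = y p" for p
    using theta_theta_path[OF A] by blast+
  have "pa_mult (st_tgt A tgt) (theta A x) (theta A y) r =
      (\<Sum>p'\<in>theta_path A ` ?Sx. \<Sum>q'\<in>theta_path A ` ?Sy.
        if path_end (st_tgt A tgt) p' = fst q' \<and> path_cat p' q' = r then theta A x p' * theta A y q' else 0)"
    using fin theta_support[OF A] by (intro pa_mult_eq_sum) auto
  also have "\<dots> = (\<Sum>p\<in>?Sx. \<Sum>q\<in>?Sy.
      if path_end (st_tgt A tgt) (theta_path A p) = fst (theta_path A q) \<and>
         path_cat (theta_path A p) (theta_path A q) = r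
      then theta A x (theta_path A p) * theta A y (theta_path A q) else 0)"
    by (simp add: sum.reindex[OF inj(1)] sum.reindex[OF inj(2)])
  also have "\<dots> = (\<Sum>p\<in>?Sx. \<Sum>q\<in>?Sy.
      if path_end tgt p = fst q \<and> theta_path A (path_cat p q) = r then x p * y q else 0)"
    by (intro sum.cong refl) (simp add: t path_end_theta_path[OF A] theta_path_path_cat)
  finally show ?thesis .
qed

lemma pa_mult_theta_outside_range:
  assumes "r \<notin> range (theta_path A)"
  shows "pa_mult (st_tgt A tgt) (theta A x) (theta A y) r = 0"
proof (rule ccontr)
  assume "pa_mult (st_tgt A tgt) (theta A x) (theta A y) r \<noteq> 0"
  then obtain p' q' where "theta A x p' \<noteq> 0" "theta A y q' \<noteq> 0" "r = path_cat p' q'"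
    by (rule pa_mult_nonzeroE)
  moreover from this obtain p q where "p' = theta_path A p" "q' = theta_path A q"
    using theta_outside_range by blast
  ultimately show False
    using assms by (simp add: theta_path_path_cat[symmetric])
qed

lemma theta_pa_mult:
  fixes x y :: "'v \<times> 'a list \<Rightarrow> 'k::field"
  assumes A: "1 \<le> A" and fin: "finite {p. x p \<noteq> 0}" "finite {p. y p \<noteq> 0}"
  shows "theta A (pa_mult tgt x y) = pa_mult (st_tgt A tgt) (theta A x) (theta A y)"
proof (rule theta_eqI[OF A])
  fix s
  have "pa_mult tgt x y s = (\<Sum>p\<in>{p. x p \<noteq> 0}. \<Sum>q\<in>{p. y p \<noteq> 0}.
      if path_end tgt p = fst q \<and> path_cat p q = s then x p * y q else 0)"
    using fin by (intro pa_mult_eq_sum) auto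
  then show "pa_mult (st_tgt A tgt) (theta A x) (theta A y) (theta_path A s) = pa_mult tgt x y s"
    by (simp add: pa_mult_theta_eq_sum[OF A fin] theta_path_eq_iff[OF A])
qed (rule pa_mult_theta_outside_range)

lemma st_vertices_Inl [simp]: "Inl v \<in> st_vertices A V E \<longleftrightarrow> v \<in> V"
  by (auto simp: st_vertices_def)

lemma st_vertices_Inr [simp]: "Inr (\<alpha>, j) \<in> st_vertices A V E \<longleftrightarrow> \<alpha> \<in> E \<and> 1 \<le> j \<and> j \<le> A - 1"
  by (auto simp: st_vertices_def)

lemma st_arrows_iff [simp]: "(\<alpha>, j) \<in> st_arrows A E \<longleftrightarrow> \<alpha> \<in> E \<and> 1 \<le> j \<and> j \<le> A"
  by (auto simp: st_arrows_def)

locale stretched_quiver = quiver V E src tgt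
  for V :: "'v set" and E :: "'a set" and src tgt :: "'a \<Rightarrow> 'v" +
  fixes A :: nat
  assumes finite_arrows: "finite E" and stretch_pos: "1 \<le> A"
begin

abbreviation "VA \<equiv> st_vertices A V E"
abbreviation "EA \<equiv> st_arrows A E"
abbreviation "srcA \<equiv> st_src A src"
abbreviation "tgtA \<equiv> st_tgt A tgt"

sublocale S: quiver VA EA srcA tgtA
proof
  have "VA = Inl ` V \<union> Inr ` (E \<times> {1..A - 1})"
    by (auto simp: st_vertices_def)
  then show "finite VA"
    using finite_vertices finite_arrows by simp
  show "\<forall>\<alpha>\<in>EA. srcA \<alpha> \<in> VA \<and> tgtA \<alpha> \<in> VA"
    using arrow_ends stretch_pos by (auto simp: st_arrows_def st_src_def st_tgt_def)
qed

lemma walk_stretched_arrow: "\<alpha> \<in> E \<Longrightarrow> walk VA EA srcA tgtA (Inl (src \<alpha>)) (stretched_arrow A \<alpha>)"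
proof -
  assume \<alpha>: "\<alpha> \<in> E"
  have "walk VA EA srcA tgtA (srcA (\<alpha>, j)) (map (\<lambda>i. (\<alpha>, i)) [j..<A + 1])"
    if "1 \<le> j" "j \<le> A" for j
    using that
  proof (induction "A - j" arbitrary: j)
    case 0
    then show ?case
      using \<alpha> arrow_ends by (auto simp: st_tgt_def st_src_def)
  next
    case (Suc k)
    then have j: "j < A" by simp
    have "[j..<A + 1] = j # [Suc j..<A + 1]"
      using Suc.prems by (simp add: upt_conv_Cons)
    moreover have "walk VA EA srcA tgtA (srcA (\<alpha>, Suc j)) (map (\<lambda>i. (\<alpha>, i)) [Suc j..<A + 1])"
      using Suc j by simp
    moreover have "srcA (\<alpha>, j) \<in> VA"
      using Suc.prems \<alpha> arrow_ends by (auto simp: st_src_def)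
    ultimately show ?case
      using Suc.prems \<alpha> j by (simp add: st_tgt_def st_src_def)
  qed
  from this[of 1] stretch_pos show ?thesis
    by (simp add: stretched_arrow_def st_src_def)
qed

lemma walk_theta_path:
  "walk V E src tgt v xs \<Longrightarrow> walk VA EA srcA tgtA (Inl v) (concat (map (stretched_arrow A) xs))"
proof (induction xs arbitrary: v)
  case (Cons \<alpha> xs)
  then show ?case
    using walk_stretched_arrow[of \<alpha>]
    by (auto simp: walk_append path_end_stretched_arrow[OF stretch_pos])
qed simp

lemma walk_from_subdivision_vertex:
  assumes "walk VA EA srcA tgtA (Inr (\<alpha>, j)) ys" "1 \<le> j" "j < A"
    and "path_end tgtA (Inr (\<alpha>, j), ys) = Inl w"
  shows "\<exists>zs. ys = map (\<lambda>i. (\<alpha>, i)) [Suc j..<A + 1] @ zs \<and>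
      walk VA EA srcA tgtA (Inl (tgt \<alpha>)) zs \<and> path_end tgtA (Inl (tgt \<alpha>), zs) = Inl w"
  using assms
proof (induction ys arbitrary: j)
  case (Cons b ys)
  from Cons.prems(1) have b: "srcA b = Inr (\<alpha>, j)" "b \<in> EA" and ys: "walk VA EA srcA tgtA (tgtA b) ys"
    by auto
  with Cons.prems(2) have b_eq: "b = (\<alpha>, Suc j)"
    by (cases b) (auto simp: st_src_def split: if_splits)
  show ?case
  proof (cases "Suc j = A")
    case True
    then show ?thesis
      using Cons.prems b_eq ys by (auto simp: st_tgt_def)
  next
    case False
    then have "tgtA b = Inr (\<alpha>, Suc j)"
      by (simp add: b_eq st_tgt_def)
    then obtain zs where zs: "ys = map (\<lambda>i. (\<alpha>, i)) [Suc (Suc j)..<A + 1] @ zs"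
      "walk VA EA srcA tgtA (Inl (tgt \<alpha>)) zs" "path_end tgtA (Inl (tgt \<alpha>), zs) = Inl w"
      using Cons.IH[of "Suc j"] Cons.prems False ys b_eq by auto
    have "[Suc j..<A + 1] = Suc j # [Suc (Suc j)..<A + 1]"
      using Cons.prems False by (simp add: upt_conv_Cons del: upt_Suc)
    with zs b_eq show ?thesis
      by auto
  qed
qed simp

lemma stretched_walk_between_vertices:
  assumes "walk VA EA srcA tgtA (Inl u) ys" "path_end tgtA (Inl u, ys) = Inl w"
  shows "\<exists>xs. walk V E src tgt u xs \<and> ys = concat (map (stretched_arrow A) xs)"
  using assms
proof (induction "length ys" arbitrary: u ys rule: less_induct)
  case less
  show ?case
  proof (cases ys)
    case Nil
    then show ?thesis
      using less.prems by (intro exI[of _ "[]"]) auto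
  next
    case (Cons b ys')
    obtain \<alpha> j where b: "b = (\<alpha>, j)" by (cases b)
    from less.prems(1) Cons b have ys': "walk VA EA srcA tgtA (tgtA (\<alpha>, j)) ys'"
      and \<alpha>: "j = 1" "src \<alpha> = u" "\<alpha> \<in> E" "u \<in> V"
      by (auto simp: st_src_def split: if_splits)
    obtain zs where zs: "ys' = map (\<lambda>i. (\<alpha>, i)) [2..<A + 1] @ zs"
      "walk VA EA srcA tgtA (Inl (tgt \<alpha>)) zs" "path_end tgtA (Inl (tgt \<alpha>), zs) = Inl w"
    proof (cases "A = 1")
      case True
      with that show ?thesis
        using ys' less.prems(2) Cons b \<alpha> by (simp add: st_tgt_def)
    next
      case False
      with that show ?thesis
        using walk_from_subdivision_vertex[of \<alpha> 1 ys' w] ys' stretch_pos less.prems(2) Cons b \<alpha>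
        by (auto simp: st_tgt_def numeral_2_eq_2)
    qed
    moreover obtain xs where "walk V E src tgt (tgt \<alpha>) xs" "zs = concat (map (stretched_arrow A) xs)"
      using less.hyps[of zs "tgt \<alpha>"] zs Cons by auto
    ultimately show ?thesis
      using Cons b \<alpha> arrow_ends stretch_pos
      by (intro exI[of _ "\<alpha> # xs"]) (simp add: stretched_arrow_Cons numeral_2_eq_2)
  qed
qed

lemma theta_closed:
  assumes x: "x \<in> carrier KQ"
  shows "theta A x \<in> carrier S.KQ"
  unfolding S.carrier_path_algebra_iff
proof
  show "finite {q. theta A x q \<noteq> 0}"
    using x theta_support[OF stretch_pos, of x]
    by (auto simp: carrier_path_algebra_iff intro: finite_subset)
  show "\<forall>q. theta A x q \<noteq> 0 \<longrightarrow> walk VA EA srcA tgtA (fst q) (snd q)"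
  proof (intro allI impI)
    fix q assume "theta A x q \<noteq> 0"
    then obtain p where "q = theta_path A p" "x p \<noteq> 0"
      using theta_support[OF stretch_pos, of x] by blast
    with x show "walk VA EA srcA tgtA (fst q) (snd q)"
      by (simp add: carrier_path_algebra_iff theta_path_eq walk_theta_path)
  qed
qed

lemma theta_vertex_idem:
  "theta A (vertex_idem V :: 'v \<times> 'a list \<Rightarrow> 'k::field) = vertex_idem (Inl ` V)"
proof (rule theta_eqI[OF stretch_pos])
  fix q :: "('v + 'a \<times> nat) \<times> ('a \<times> nat) list"
  assume q: "q \<notin> range (theta_path A)"
  show "vertex_idem (Inl ` V) q = (0::'k)"
  proof (rule ccontr)
    assume "vertex_idem (Inl ` V) q \<noteq> (0::'k)"
    then obtain v where "fst q = Inl v" "snd q = []"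
      by (auto simp: vertex_idem_def split: if_splits)
    then have "q = theta_path A (v, [])"
      by (simp add: theta_path_eq prod_eq_iff)
    with q show False by blast
  qed
qed (use stretch_pos in \<open>auto simp: vertex_idem_def theta_path_eq stretched_arrow_Cons\<close>)

lemma finsum_trivial_paths:
  "finsum S.KQ (\<lambda>v. path_elem (Inl v, [])) V =
    (vertex_idem (Inl ` V) :: ('v + 'a \<times> nat) \<times> ('a \<times> nat) list \<Rightarrow> 'k::field)"
proof -
  interpret SR: ring "S.KQ :: (_ \<Rightarrow> 'k) ring" by (rule S.ring_path_algebra)
  have "finsum (S.KQ :: (_ \<Rightarrow> 'k) ring) (\<lambda>v. path_elem (Inl v, [])) F = vertex_idem (Inl ` F)"
    if "F \<subseteq> V" for F
  proof -
    have "finite F" using that finite_vertices finite_subset by blast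
    then show ?thesis
      using that
    proof (induction F rule: finite_induct)
      case (insert v F)
      then have "path_elem (Inl v, []) \<in> carrier (S.KQ :: (_ \<Rightarrow> 'k) ring)"
        "(\<lambda>v. path_elem (Inl v, [])) \<in> F \<rightarrow> carrier (S.KQ :: (_ \<Rightarrow> 'k) ring)"
        by (auto simp: S.carrier_path_algebra_iff path_elem_def)
      with insert show ?case
        by (auto simp: SR.finsum_insert path_elem_def vertex_idem_def fun_eq_iff)
    qed (simp add: vertex_idem_def fun_eq_iff)
  qed
  then show ?thesis by simp
qed

lemma theta_hom_mult:
  "x \<in> carrier KQ \<Longrightarrow> y \<in> carrier KQ \<Longrightarrow> theta A (x \<otimes>\<^bsub>KQ\<^esub> y) = theta A x \<otimes>\<^bsub>S.KQ\<^esub> theta A y"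
  by (simp add: theta_pa_mult[OF stretch_pos] carrier_path_algebra_iff)

lemma theta_hom_add: "theta A (x \<oplus>\<^bsub>KQ\<^esub> y) = theta A x \<oplus>\<^bsub>S.KQ\<^esub> theta A y"
  by (simp add: theta_add[OF stretch_pos])

lemma vertex_idem_Inl_idempotent:
  "vertex_idem (Inl ` V) \<in> carrier (S.KQ :: (_ \<Rightarrow> 'k::field) ring)"
  "vertex_idem (Inl ` V) \<otimes>\<^bsub>S.KQ\<^esub> vertex_idem (Inl ` V) = (vertex_idem (Inl ` V) :: _ \<Rightarrow> 'k)"
proof -
  interpret R: ring "KQ :: ('v \<times> 'a list \<Rightarrow> 'k) ring" by (rule ring_path_algebra)
  have "theta A \<one>\<^bsub>KQ\<^esub> = (vertex_idem (Inl ` V) :: _ \<Rightarrow> 'k)"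
    by (simp add: theta_vertex_idem)
  then show "vertex_idem (Inl ` V) \<in> carrier (S.KQ :: (_ \<Rightarrow> 'k::field) ring)"
    "vertex_idem (Inl ` V) \<otimes>\<^bsub>S.KQ\<^esub> vertex_idem (Inl ` V) = (vertex_idem (Inl ` V) :: _ \<Rightarrow> 'k)"
    using theta_closed[OF R.one_closed] theta_hom_mult[OF R.one_closed R.one_closed]
    by (simp_all only: R.l_one[OF R.one_closed])
qed

lemma theta_image_if_supported_on_walks:
  assumes z: "z \<in> carrier (S.KQ :: (_ \<Rightarrow> 'k::field) ring)"
    and supp: "\<And>r. z r \<noteq> 0 \<Longrightarrow> \<exists>p. walk V E src tgt (fst p) (snd p) \<and> r = theta_path A p"
  shows "z \<in> theta A ` carrier (KQ :: ('v \<times> 'a list \<Rightarrow> 'k) ring)"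
proof -
  define x where "x p = z (theta_path A p)" for p
  have "x \<in> carrier KQ"
    unfolding carrier_path_algebra_iff
  proof
    have "{p. x p \<noteq> 0} = theta_path A -` {r. z r \<noteq> 0}"
      by (auto simp: x_def)
    moreover have "finite (theta_path A -` {r. z r \<noteq> 0})"
      using z inj_theta_path[OF stretch_pos]
      by (intro finite_vimageI) (simp_all add: S.carrier_path_algebra_iff)
    ultimately show "finite {p. x p \<noteq> 0}"
      by simp
    show "\<forall>p. x p \<noteq> 0 \<longrightarrow> walk V E src tgt (fst p) (snd p)"
    proof (intro allI impI)
      fix p assume "x p \<noteq> 0"
      then obtain p' where "walk V E src tgt (fst p') (snd p')" "theta_path A p = theta_path A p'"
        using supp[of "theta_path A p"] unfolding x_def by blast
      then show "walk V E src tgt (fst p) (snd p)"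
        by (simp add: theta_path_eq_iff[OF stretch_pos])
    qed
  qed
  moreover have "theta A x = z"
    using supp by (intro theta_eqI[OF stretch_pos]) (auto simp: x_def)
  ultimately show ?thesis
    by blast
qed

lemma corner_in_theta_image:
  assumes y: "y \<in> carrier (S.KQ :: (_ \<Rightarrow> 'k::field) ring)"
  defines "e \<equiv> vertex_idem (Inl ` V)"
  shows "e \<otimes>\<^bsub>S.KQ\<^esub> y \<otimes>\<^bsub>S.KQ\<^esub> e \<in> theta A ` carrier (KQ :: ('v \<times> 'a list \<Rightarrow> 'k) ring)"
proof -
  interpret SR: ring "S.KQ :: (_ \<Rightarrow> 'k) ring" by (rule S.ring_path_algebra)
  have e: "e \<in> carrier S.KQ"
    unfolding e_def by (rule vertex_idem_Inl_idempotent(1))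
  have fin: "finite (Inl ` V)" "finite {q. y q \<noteq> 0}" "finite {q. pa_mult tgtA e y q \<noteq> 0}"
    using finite_vertices y SR.m_closed[OF e y] by (auto simp: S.carrier_path_algebra_iff)
  have eye: "(e \<otimes>\<^bsub>S.KQ\<^esub> y \<otimes>\<^bsub>S.KQ\<^esub> e) r =
      (if path_end tgtA r \<in> Inl ` V \<and> fst r \<in> Inl ` V then y r else 0)" for r
  proof -
    have "(e \<otimes>\<^bsub>S.KQ\<^esub> y \<otimes>\<^bsub>S.KQ\<^esub> e) r = (if path_end tgtA r \<in> Inl ` V then pa_mult tgtA e y r else 0)"
      unfolding path_algebra_simps e_def by (rule pa_mult_vertex_idem_right[OF fin(1,3)[unfolded e_def]])
    also have "\<dots> = (if path_end tgtA r \<in> Inl ` V \<and> fst r \<in> Inl ` V then y r else 0)"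
      unfolding e_def by (simp add: pa_mult_vertex_idem_left[OF fin(1,2)])
    finally show ?thesis .
  qed
  show ?thesis
  proof (rule theta_image_if_supported_on_walks)
    show "e \<otimes>\<^bsub>S.KQ\<^esub> y \<otimes>\<^bsub>S.KQ\<^esub> e \<in> carrier S.KQ"
      using e y by (intro SR.m_closed)
  next
    fix r assume "(e \<otimes>\<^bsub>S.KQ\<^esub> y \<otimes>\<^bsub>S.KQ\<^esub> e) r \<noteq> 0"
    then have "path_end tgtA r \<in> Inl ` V" "fst r \<in> Inl ` V" "y r \<noteq> 0"
      unfolding eye by (auto split: if_splits)
    then obtain u ys w where r: "r = (Inl u, ys)" and "path_end tgtA r = Inl w" "y r \<noteq> 0"
      by (cases r) auto
    with y have "walk VA EA srcA tgtA (Inl u) ys" "path_end tgtA (Inl u, ys) = Inl w"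
      by (auto simp: S.carrier_path_algebra_iff)
    then obtain xs where "walk V E src tgt u xs" "ys = concat (map (stretched_arrow A) xs)"
      using stretched_walk_between_vertices by blast
    with r show "\<exists>p. walk V E src tgt (fst p) (snd p) \<and> r = theta_path A p"
      by (intro exI[of _ "(u, xs)"]) (simp add: theta_path_eq)
  qed
qed

lemma theta_in_corner:
  assumes x: "x \<in> carrier (KQ :: ('v \<times> 'a list \<Rightarrow> 'k::field) ring)"
  shows "theta A x \<in> carrier (corner_ring S.KQ (vertex_idem (Inl ` V)))"
proof -
  interpret R: ring "KQ :: ('v \<times> 'a list \<Rightarrow> 'k) ring" by (rule ring_path_algebra)
  interpret SR: ring "S.KQ :: (_ \<Rightarrow> 'k) ring" by (rule S.ring_path_algebra)
  have e: "theta A \<one>\<^bsub>KQ\<^esub> = (vertex_idem (Inl ` V) :: _ \<Rightarrow> 'k)"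
    by (simp add: theta_vertex_idem)
  have "vertex_idem (Inl ` V) \<otimes>\<^bsub>S.KQ\<^esub> theta A x \<otimes>\<^bsub>S.KQ\<^esub> vertex_idem (Inl ` V) =
      theta A (\<one>\<^bsub>KQ\<^esub> \<otimes>\<^bsub>KQ\<^esub> x \<otimes>\<^bsub>KQ\<^esub> \<one>\<^bsub>KQ\<^esub>)"
    using x by (simp only: theta_hom_mult R.m_closed R.one_closed e)
  also have "\<dots> = theta A x"
    using x by (simp only: R.l_one R.r_one)
  finally show ?thesis
    using theta_closed[OF x] by (simp add: SR.corner_ring_carrier_iff[OF vertex_idem_Inl_idempotent])
qed

lemma theta_ring_iso:
  "theta A \<in> ring_iso (KQ :: ('v \<times> 'a list \<Rightarrow> 'k::field) ring) (corner_ring S.KQ (vertex_idem (Inl ` V)))"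
proof (rule ring_iso_memI)
  show "theta A (x \<otimes>\<^bsub>KQ\<^esub> y) = theta A x \<otimes>\<^bsub>corner_ring S.KQ (vertex_idem (Inl ` V))\<^esub> theta A y"
    if "x \<in> carrier KQ" "y \<in> carrier KQ" for x y
    using that by (simp only: corner_ring_simps theta_hom_mult)
  show "theta A \<one>\<^bsub>KQ\<^esub> = \<one>\<^bsub>corner_ring S.KQ (vertex_idem (Inl ` V))\<^esub>"
    by (simp add: theta_vertex_idem)
  have "theta A ` carrier (KQ :: ('v \<times> 'a list \<Rightarrow> 'k) ring) = carrier (corner_ring S.KQ (vertex_idem (Inl ` V)))"
    using theta_in_corner corner_in_theta_image by (auto simp: corner_ring_def)
  moreover have "inj_on (theta A) (carrier (KQ :: ('v \<times> 'a list \<Rightarrow> 'k) ring))"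
    by (rule inj_on_subset[OF inj_theta[OF stretch_pos] subset_UNIV])
  ultimately show "bij_betw (theta A) (carrier (KQ :: ('v \<times> 'a list \<Rightarrow> 'k) ring))
      (carrier (corner_ring S.KQ (vertex_idem (Inl ` V))))"
    by (simp add: bij_betw_def)
qed (simp_all only: corner_ring_simps theta_hom_add theta_in_corner)

end

theorem theorem1p9:
  fixes V :: "'v set" and E :: "'a set" and src tgt :: "'a \<Rightarrow> 'v"
    and G :: "('v \<times> 'a list \<Rightarrow> 'k::field) set" and A :: nat
  assumes finV: "finite V" and finE: "finite E"
    and arrows: "\<forall>\<alpha>\<in>E. src \<alpha> \<in> V \<and> tgt \<alpha> \<in> V"
    and Gcar: "G \<subseteq> carrier (path_algebra V E src tgt)"
    and finG: "finite G"
    and Gunif: "\<forall>g\<in>G. uniform_elem V E src tgt g"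
    and adm: "admissible_ideal V E src tgt (genideal (path_algebra V E src tgt) G)"
    and Gmin: "\<forall>H. H \<subset> G \<longrightarrow>
                 genideal (path_algebra V E src tgt) H \<noteq> genideal (path_algebra V E src tgt) G"
    and A: "A \<ge> 1"
  shows "\<exists>\<phi>. \<phi> \<in> ring_iso
            (path_algebra V E src tgt Quot genideal (path_algebra V E src tgt) G)
            (corner_ring
               (stretched_path_algebra A V E src tgt Quot stretched_ideal A V E src tgt G)
               (stretched_ideal A V E src tgt G
                  +>\<^bsub>stretched_path_algebra A V E src tgt\<^esub>
                  (finsum (stretched_path_algebra A V E src tgt) (\<lambda>v. path_elem (Inl v, [])) V)))
          \<and> (\<forall>c X. X \<in> carrier (path_algebra V E src tgt Quot genideal (path_algebra V E src tgt) G) \<longrightarrow>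
               \<phi> (quot_smult (path_algebra V E src tgt) (genideal (path_algebra V E src tgt) G) c X)
               = quot_smult (stretched_path_algebra A V E src tgt) (stretched_ideal A V E src tgt G) c (\<phi> X))"
proof -
  interpret stretched_quiver V E src tgt A
    using finV finE arrows A by unfold_locales auto
  let ?I = "genideal KQ G" and ?J = "genideal S.KQ (theta A ` G)"
  interpret iso_onto_corner KQ S.KQ "vertex_idem (Inl ` V)" "theta A"
    using vertex_idem_Inl_idempotent theta_ring_iso
    by (intro iso_onto_corner.intro iso_onto_corner_axioms.intro ring_path_algebra S.ring_path_algebra)
  obtain \<phi> where \<phi>: "\<phi> \<in> ring_iso (KQ Quot ?I) (corner_ring (S.KQ Quot ?J) (?J +>\<^bsub>S.KQ\<^esub> vertex_idem (Inl ` V)))"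
    and \<phi>_rcos: "\<And>x. x \<in> carrier KQ \<Longrightarrow> \<phi> (?I +>\<^bsub>KQ\<^esub> x) = ?J +>\<^bsub>S.KQ\<^esub> theta A x"
    using corner_quotient_iso[OF Gcar] by blast
  have "\<phi> (quot_smult KQ ?I c X) = quot_smult S.KQ ?J c (\<phi> X)"
    if X: "X \<in> carrier (KQ Quot ?I)" for c X
  proof -
    obtain x where x: "x \<in> carrier KQ" "X = ?I +>\<^bsub>KQ\<^esub> x"
      using X by (auto simp: carrier_FactRing)
    have ideals: "ideal ?I KQ" "ideal ?J S.KQ"
      using Gcar theta_closed by (auto intro!: ring.genideal_ideal ring_path_algebra S.ring_path_algebra)
    show ?thesis
      using x path_algebra_smult_closed[OF x(1)] theta_closed[OF x(1)]
      by (simp add: quot_smult_rcos[OF ideals(1)] S.quot_smult_rcos[OF ideals(2)] \<phi>_rcos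
          theta_smult[OF stretch_pos])
  qed
  with \<phi> show ?thesis
    unfolding stretched_ideal_def stretched_path_algebra_def finsum_trivial_paths by blast
qed

end
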